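(* For every NFA $\mathcal A$, the relation $S(\supseteq^{\mathrm{fw}},\subseteq^{\mathrm{fw}})$ is good for saturation, i.e. $\mathcal L(\mathrm{Sat}(\mathcal A,S(\supseteq^{\mathrm{fw}},\subseteq^{\mathrm{fw}})))=\mathcal L(\mathcal A)$.
   Context: An NFA $\mathcal A=(\Sigma,Q,I,F,\delta)$, $\delta\subseteq Q\times\Sigma\times Q$; its language is the set of finite words with a finite trace starting in $I$ and ending in $F$. Forward finite trace inclusion: $p\subseteq^{\mathrm{fw}}q$ iff for every finite word $w$, if some $w$-trace from $p$ ends in $F$ then some $w$-trace from $q$ ends in $F$; $\supseteq^{\mathrm{fw}}$ is its inverse. Let $\Delta=Q\times\Sigma\times Q$; $S(R_b,R_f)=\{((p,\sigma,r),(p',\sigma,r'))\in\Delta\times\Delta:p\,R_b\,p',\ r\,R_f\,r'\}$. For reflexive $S\subseteq\Delta\times\Delta$, $\mathrm{Sat}(\mathcal A,S)=(\Sigma,Q,I,F,\{t'\in\Delta:\exists t\in\delta,(t',t)\in S\})$. *)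

theory Defs
  imports Main
begin

record ('s, 'q) nfa =
  alph  :: "'s set"
  states :: "'q set"
  init  :: "'q set"
  final :: "'q set"
  trans :: "('q \<times> 's \<times> 'q) set"

definition wf_nfa :: "('s, 'q) nfa \<Rightarrow> bool" where
  "wf_nfa A \<longleftrightarrow> finite (alph A) \<and> finite (states A) \<and>
     init A \<subseteq> states A \<and> final A \<subseteq> states A \<and>
     trans A \<subseteq> states A \<times> alph A \<times> states A"

inductive run :: "('s, 'q) nfa \<Rightarrow> 'q \<Rightarrow> 's list \<Rightarrow> 'q \<Rightarrow> bool" for A where
  run_nil: "run A p [] p"
| run_cons: "(p, a, r) \<in> trans A \<Longrightarrow> run A r w q \<Longrightarrow> run A p (a # w) q"

definition lang :: "('s, 'q) nfa \<Rightarrow> 's list set" where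
  "lang A = {w. w \<in> lists (alph A) \<and> (\<exists>i\<in>init A. \<exists>f\<in>final A. run A i w f)}"

definition fw_incl :: "('s, 'q) nfa \<Rightarrow> 'q rel" where
  "fw_incl A = {(p, q). p \<in> states A \<and> q \<in> states A \<and>
     (\<forall>w \<in> lists (alph A). (\<exists>f\<in>final A. run A p w f) \<longrightarrow> (\<exists>f\<in>final A. run A q w f))}"

definition Delta :: "('s, 'q) nfa \<Rightarrow> ('q \<times> 's \<times> 'q) set" where
  "Delta A = states A \<times> alph A \<times> states A"

definition S_rel :: "('s, 'q) nfa \<Rightarrow> 'q rel \<Rightarrow> 'q rel \<Rightarrow> (('q \<times> 's \<times> 'q) \<times> ('q \<times> 's \<times> 'q)) set" where
  "S_rel A Rb Rf = {((p, a, r), (p', a', r')).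
      (p, a, r) \<in> Delta A \<and> (p', a', r') \<in> Delta A \<and> a = a' \<and> (p, p') \<in> Rb \<and> (r, r') \<in> Rf}"

definition Sat :: "('s, 'q) nfa \<Rightarrow> (('q \<times> 's \<times> 'q) \<times> ('q \<times> 's \<times> 'q)) set \<Rightarrow> ('s, 'q) nfa" where
  "Sat A S = A\<lparr> trans := {t' \<in> Delta A. \<exists>t \<in> trans A. (t', t) \<in> S} \<rparr>"

end

theory Submission
  imports Defs
begin

text \<open>Saturation only adds transitions, so the original language is contained in the saturated
one. Conversely, an added transition (p, a, r) is witnessed by an original transition (p', a, r')
with p \<supseteq>fw p' and r \<subseteq>fw r'; induction on the length of a saturated run, from its end,
shows that every state of the run still accepts its remaining suffix in the original automaton:
whatever r accepts is accepted by r', hence after reading a by p', hence by p.\<close>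

definition accepts :: "('s, 'q) nfa \<Rightarrow> 'q \<Rightarrow> 's list \<Rightarrow> bool" where
  "accepts A p w \<longleftrightarrow> (\<exists>f\<in>final A. run A p w f)"

lemma fw_incl_iff:
  "(p, q) \<in> fw_incl A \<longleftrightarrow> p \<in> states A \<and> q \<in> states A \<and>
     (\<forall>w\<in>lists (alph A). accepts A p w \<longrightarrow> accepts A q w)"
  by (simp add: fw_incl_def accepts_def)

lemma fw_incl_refl: "p \<in> states A \<Longrightarrow> (p, p) \<in> fw_incl A"
  by (simp add: fw_incl_iff)

lemma accepts_Cons: "(p, a, r) \<in> trans A \<Longrightarrow> accepts A r w \<Longrightarrow> accepts A p (a # w)"
  by (auto simp: accepts_def intro: run_cons)

lemma run_mono: "run A p w q \<Longrightarrow> trans A \<subseteq> trans B \<Longrightarrow> run B p w q"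
  by (induction rule: run.induct) (auto intro: run.intros)

lemma trans_Sat: "trans (Sat A S) = {t' \<in> Delta A. \<exists>t \<in> trans A. (t', t) \<in> S}"
  by (simp add: Sat_def)

lemma Sat_simps [simp]:
  "alph (Sat A S) = alph A" "init (Sat A S) = init A" "final (Sat A S) = final A"
  by (simp_all add: Sat_def)

lemma trans_subset_Sat:
  assumes "trans A \<subseteq> Delta A" and "\<And>t. t \<in> trans A \<Longrightarrow> (t, t) \<in> S"
  shows "trans A \<subseteq> trans (Sat A S)"
  using assms by (auto simp: trans_Sat intro!: bexI)

lemma lang_subset_Sat:
  assumes "trans A \<subseteq> Delta A" and "\<And>t. t \<in> trans A \<Longrightarrow> (t, t) \<in> S"
  shows "lang A \<subseteq> lang (Sat A S)"
  using run_mono[OF _ trans_subset_Sat[OF assms]] by (fastforce simp: lang_def)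

lemma S_rel_refl_on_Delta:
  assumes "\<And>p. p \<in> states A \<Longrightarrow> (p, p) \<in> Rb" and "\<And>p. p \<in> states A \<Longrightarrow> (p, p) \<in> Rf"
    and "t \<in> Delta A"
  shows "(t, t) \<in> S_rel A Rb Rf"
  using assms by (auto simp: S_rel_def Delta_def)

lemma accepts_if_run_Sat_fw:
  assumes "run (Sat A (S_rel A ((fw_incl A)\<inverse>) (fw_incl A))) p w f"
    and "f \<in> final A" and "w \<in> lists (alph A)"
  shows "accepts A p w"
  using assms
proof (induction rule: run.induct)
  case (run_nil p)
  then show ?case by (auto simp: accepts_def intro: run.run_nil)
next
  case (run_cons p a r w q)
  then have a: "a \<in> alph A" and w: "w \<in> lists (alph A)" by auto
  from run_cons.hyps(1) obtain p' r' where t: "(p', a, r') \<in> trans A"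
    and "(p', p) \<in> fw_incl A" and "(r, r') \<in> fw_incl A"
    by (auto simp: trans_Sat S_rel_def)
  then have p: "accepts A p' v \<Longrightarrow> accepts A p v" and r: "accepts A r w \<Longrightarrow> accepts A r' w"
    if "v \<in> lists (alph A)" for v
    using w that by (auto simp: fw_incl_iff)
  have "accepts A r w" using run_cons.IH run_cons.prems(1) w .
  then have "accepts A p' (a # w)" using t r w by (blast intro: accepts_Cons)
  then show ?case using p a w by auto
qed

theorem theorem10p7:
  fixes A :: "('s, 'q) nfa"
  assumes "wf_nfa A"
  shows "lang (Sat A (S_rel A ((fw_incl A)\<inverse>) (fw_incl A))) = lang A"
proof
  show "lang (Sat A (S_rel A ((fw_incl A)\<inverse>) (fw_incl A))) \<subseteq> lang A"
    by (auto simp: lang_def accepts_def[symmetric] dest: accepts_if_run_Sat_fw)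
  have "trans A \<subseteq> Delta A" using assms by (simp add: wf_nfa_def Delta_def)
  then show "lang A \<subseteq> lang (Sat A (S_rel A ((fw_incl A)\<inverse>) (fw_incl A)))"
    by (intro lang_subset_Sat S_rel_refl_on_Delta) (auto intro: fw_incl_refl)
qed

end
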